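(* For the FCIQMC step $v_{t+1}=F(A,v_t)$ and $\xi_{t+1}=v_{t+1}-Av_t$, $$\mathbb{E}\bigl(\|\xi_{t+1}\|_2^2\mid\mathcal{F}_t\bigr)\le\Bigl(\max_{1\le k\le N}(\|a_k\|_0-2)\|a_{o,k}\|_2^2+\tfrac12\Bigr)\frac{\|v_t\|_1^2}{M_t},$$ where $a_k=A(:,k)$ is the $k$-th column of $A$, $a_{o,k}$ is the $k$-th column of $A_o$, and $M_t=\|v_t\|_1$.
   Context: Let $A\in\mathbb{R}^{N\times N}$ be real symmetric, with every diagonal entry nonzero and every column having at least 2 nonzero entries. Write $A=A_d+A_o$ with $A_d$ the diagonal part and $A_o$ the off-diagonal part; $\|x\|_0$ is the number of nonzero entries; $e_l$ the $l$-th standard basis vector. FCIQMC step: the current iterate $v_t\in\mathbb{Z}^N$ is represented by $M_t=\|v_t\|_1$ signed particles, $|v_t(k)|$ particles at location $k$ each with sign $\mathrm{sgn}(v_t(k))$ (so $v_t$ is the sum of $s_\alpha e_{l_\alpha}$ over particles $\alpha$ with location $l_\alpha$ and sign $s_\alpha$). For each particle $\alpha$ with location $k$ and sign $s$, independently of all other particles (conditionally on $\mathcal F_t$): (Spawning) choose $l$ uniformly at random among the $\|a_{o,k}\|_0$ indices $j$ with $A_o(j,k)\neq0$; let $Q=\|a_{o,k}\|_0|A(l,k)|$ and let $n=\lfloor Q\rfloor$ with probability $1-(Q-\lfloor Q\rfloor)$ and $n=\lfloor Q\rfloor+1$ with probability $Q-\lfloor Q\rfloor$; contribute $n\,\mathrm{sgn}(A(l,k)s)\,e_l$.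 (Diagonal cloning/death) independently, let $Q=|A(k,k)|$, $n$ chosen by the same rounding rule, and contribute $n\,\mathrm{sgn}(A(k,k)s)\,e_k$. (Annihilation) $v_{t+1}=F(A,v_t)$ is the sum of all contributions of all particles (particles of opposite sign at the same location cancel, so $v_{t+1}$ again has $\|v_{t+1}\|_1$ particles). $\mathcal{F}_t=\sigma(v_1,\dots,v_t)$. *)

theory Defs
  imports "HOL-Probability.Probability"
begin

text \<open>Indices are 0..N-1. A matrix is a function nat => nat => real (A i j = entry in row i,
column j); an integer vector is nat => int, only entries below N are relevant.\<close>

definition sgn_int :: "real \<Rightarrow> int" where
  "sgn_int x = (if x > 0 then 1 else if x < 0 then -1 else 0)"

definition round_pmf :: "real \<Rightarrow> int pmf" where
  "round_pmf Q = map_pmf (\<lambda>b. if b then \<lfloor>Q\<rfloor> + 1 else \<lfloor>Q\<rfloor>) (bernoulli_pmf (Q - of_int \<lfloor>Q\<rfloor>))"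

definition unit_vec :: "nat \<Rightarrow> int \<Rightarrow> nat \<Rightarrow> int" where
  "unit_vec l c = (\<lambda>i. if i = l then c else 0)"

definition offdiag_support :: "nat \<Rightarrow> (nat \<Rightarrow> nat \<Rightarrow> real) \<Rightarrow> nat \<Rightarrow> nat set" where
  "offdiag_support N A k = {j. j < N \<and> j \<noteq> k \<and> A j k \<noteq> 0}"

definition spawn_pmf :: "nat \<Rightarrow> (nat \<Rightarrow> nat \<Rightarrow> real) \<Rightarrow> nat \<Rightarrow> int \<Rightarrow> (nat \<Rightarrow> int) pmf" where
  "spawn_pmf N A k s =
     bind_pmf (pmf_of_set (offdiag_support N A k)) (\<lambda>l.
       map_pmf (\<lambda>n. unit_vec l (n * sgn_int (A l k * of_int s)))
         (round_pmf (real (card (offdiag_support N A k)) * \<bar>A l k\<bar>)))"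

definition diag_pmf :: "(nat \<Rightarrow> nat \<Rightarrow> real) \<Rightarrow> nat \<Rightarrow> int \<Rightarrow> (nat \<Rightarrow> int) pmf" where
  "diag_pmf A k s = map_pmf (\<lambda>n. unit_vec k (n * sgn_int (A k k * of_int s))) (round_pmf \<bar>A k k\<bar>)"

definition particle_pmf :: "nat \<Rightarrow> (nat \<Rightarrow> nat \<Rightarrow> real) \<Rightarrow> nat \<Rightarrow> int \<Rightarrow> (nat \<Rightarrow> int) pmf" where
  "particle_pmf N A k s =
     bind_pmf (spawn_pmf N A k s) (\<lambda>x. bind_pmf (diag_pmf A k s) (\<lambda>y. return_pmf (\<lambda>i. x i + y i)))"

fun sum_indep_pmf :: "(nat \<Rightarrow> int) pmf list \<Rightarrow> (nat \<Rightarrow> int) pmf" where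
  "sum_indep_pmf [] = return_pmf (\<lambda>_. 0)"
| "sum_indep_pmf (p # ps) = bind_pmf p (\<lambda>x. bind_pmf (sum_indep_pmf ps) (\<lambda>y. return_pmf (\<lambda>i. x i + y i)))"

definition particles :: "nat \<Rightarrow> (nat \<Rightarrow> int) \<Rightarrow> (nat \<times> int) list" where
  "particles N v = concat (map (\<lambda>k. replicate (nat \<bar>v k\<bar>) (k, sgn (v k))) [0..<N])"

text \<open>Law of v_{t+1} = F(A, v_t) given v_t = v (annihilation = summation).\<close>
definition fciqmc_step :: "nat \<Rightarrow> (nat \<Rightarrow> nat \<Rightarrow> real) \<Rightarrow> (nat \<Rightarrow> int) \<Rightarrow> (nat \<Rightarrow> int) pmf" where
  "fciqmc_step N A v = sum_indep_pmf (map (\<lambda>(k, s). particle_pmf N A k s) (particles N v))"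

definition l1_norm :: "nat \<Rightarrow> (nat \<Rightarrow> int) \<Rightarrow> real" where
  "l1_norm N v = (\<Sum>k<N. \<bar>real_of_int (v k)\<bar>)"

definition matvec :: "nat \<Rightarrow> (nat \<Rightarrow> nat \<Rightarrow> real) \<Rightarrow> (nat \<Rightarrow> int) \<Rightarrow> nat \<Rightarrow> real" where
  "matvec N A v = (\<lambda>i. \<Sum>j<N. A i j * real_of_int (v j))"

definition sq_l2_norm :: "nat \<Rightarrow> (nat \<Rightarrow> real) \<Rightarrow> real" where
  "sq_l2_norm N x = (\<Sum>i<N. (x i)^2)"

definition col_l0 :: "nat \<Rightarrow> (nat \<Rightarrow> nat \<Rightarrow> real) \<Rightarrow> nat \<Rightarrow> nat" where
  "col_l0 N A k = card {j. j < N \<and> A j k \<noteq> 0}"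

definition offdiag_col_sq_l2 :: "nat \<Rightarrow> (nat \<Rightarrow> nat \<Rightarrow> real) \<Rightarrow> nat \<Rightarrow> real" where
  "offdiag_col_sq_l2 N A k = (\<Sum>j\<in>{j. j < N \<and> j \<noteq> k}. (A j k)^2)"

end

theory Submission
  imports Defs
begin

text \<open>
  Conditionally on \<open>v\<^sub>t\<close>, the new iterate is a sum of independent contributions, one per
  particle, and the contribution of a particle with sign \<open>s\<close> at \<open>k\<close> has mean \<open>s a\<^sub>k\<close>; these
  means add up to \<open>A v\<^sub>t\<close>. Hence \<open>E \<parallel>\<xi>\<^sub>t\<^sub>+\<^sub>1\<parallel>\<^sup>2\<close> is the sum of the variances of the \<open>M\<^sub>t\<close>
  contributions. Stochastic rounding of \<open>Q\<close> has mean \<open>Q\<close> and second moment at most \<open>Q\<^sup>2 + 1/4\<close>.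
  The spawned vector, with \<open>m = \<parallel>a\<^sub>o\<^sub>,\<^sub>k\<parallel>\<^sub>0 = \<parallel>a\<^sub>k\<parallel>\<^sub>0 - 1\<close> candidate targets, therefore has second
  moment at most \<open>m \<parallel>a\<^sub>o\<^sub>,\<^sub>k\<parallel>\<^sub>2\<^sup>2 + 1/4\<close> and squared mean \<open>\<parallel>a\<^sub>o\<^sub>,\<^sub>k\<parallel>\<^sub>2\<^sup>2\<close>, so its variance is at most
  \<open>(\<parallel>a\<^sub>k\<parallel>\<^sub>0 - 2) \<parallel>a\<^sub>o\<^sub>,\<^sub>k\<parallel>\<^sub>2\<^sup>2 + 1/4\<close>; the independent diagonal step adds at most \<open>1/4\<close>.
  Summing over the \<open>M\<^sub>t = \<parallel>v\<^sub>t\<parallel>\<^sub>1\<close> particles gives \<open>M\<^sub>t C = C \<parallel>v\<^sub>t\<parallel>\<^sub>1\<^sup>2 / M\<^sub>t\<close>.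
\<close>

lemma expectation_bind_pmf_finite:
  fixes f :: "'b \<Rightarrow> real"
  assumes "finite (set_pmf M)" and "\<And>x. x \<in> set_pmf M \<Longrightarrow> finite (set_pmf (N x))"
  shows "measure_pmf.expectation (bind_pmf M N) f
           = measure_pmf.expectation M (\<lambda>x. measure_pmf.expectation (N x) f)"
  using assms by (simp add: pmf_expectation_bind[of "set_pmf M"] integral_measure_pmf_real mult.commute)

definition indep_add_pmf :: "(nat \<Rightarrow> int) pmf \<Rightarrow> (nat \<Rightarrow> int) pmf \<Rightarrow> (nat \<Rightarrow> int) pmf" where
  "indep_add_pmf p q = bind_pmf p (\<lambda>x. bind_pmf q (\<lambda>y. return_pmf (\<lambda>i. x i + y i)))"

definition mean_vec :: "(nat \<Rightarrow> int) pmf \<Rightarrow> nat \<Rightarrow> real" where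
  "mean_vec p i = measure_pmf.expectation p (\<lambda>x. real_of_int (x i))"

text \<open>\<open>mean_sq_dev N p (mean_vec p)\<close> is the total variance of \<open>p\<close> on the first \<open>N\<close> coordinates,
  \<open>mean_sq_dev N p (\<lambda>_. 0)\<close> its second moment.\<close>

definition mean_sq_dev :: "nat \<Rightarrow> (nat \<Rightarrow> int) pmf \<Rightarrow> (nat \<Rightarrow> real) \<Rightarrow> real" where
  "mean_sq_dev N p c = measure_pmf.expectation p (\<lambda>x. \<Sum>i<N. (real_of_int (x i) - c i)\<^sup>2)"

lemma finite_set_indep_add_pmf:
  "finite (set_pmf p) \<Longrightarrow> finite (set_pmf q) \<Longrightarrow> finite (set_pmf (indep_add_pmf p q))"
  unfolding indep_add_pmf_def by simp

lemma expectation_indep_add_pmf: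
  fixes g :: "(nat \<Rightarrow> int) \<Rightarrow> real"
  assumes "finite (set_pmf p)" and "finite (set_pmf q)"
  shows "measure_pmf.expectation (indep_add_pmf p q) g
           = measure_pmf.expectation p (\<lambda>x. measure_pmf.expectation q (\<lambda>y. g (\<lambda>i. x i + y i)))"
  using assms unfolding indep_add_pmf_def by (simp add: expectation_bind_pmf_finite)

lemma mean_vec_indep_add_pmf:
  assumes p: "finite (set_pmf p)" and q: "finite (set_pmf q)"
  shows "mean_vec (indep_add_pmf p q) i = mean_vec p i + mean_vec q i"
proof -
  have "mean_vec (indep_add_pmf p q) i
          = measure_pmf.expectation p (\<lambda>x. real_of_int (x i) + mean_vec q i)"
    unfolding mean_vec_def expectation_indep_add_pmf[OF p q]
    by (simp add: integrable_measure_pmf_finite[OF q])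
  then show ?thesis
    by (simp add: mean_vec_def integrable_measure_pmf_finite[OF p])
qed

lemma mean_sq_dev_cong:
  "(\<And>i. i < N \<Longrightarrow> c i = c' i) \<Longrightarrow> mean_sq_dev N p c = mean_sq_dev N p c'"
  unfolding mean_sq_dev_def by (intro Bochner_Integration.integral_cong refl sum.cong) auto

text \<open>The cross term vanishes because \<open>q\<close> is centred at \<open>b\<close>.\<close>

lemma mean_sq_dev_indep_add_pmf:
  assumes p: "finite (set_pmf p)" and q: "finite (set_pmf q)"
    and b: "\<And>i. i < N \<Longrightarrow> mean_vec q i = b i"
  shows "mean_sq_dev N (indep_add_pmf p q) (\<lambda>i. a i + b i) = mean_sq_dev N p a + mean_sq_dev N q b"
proof -
  note Ip = integrable_measure_pmf_finite[OF p] and Iq = integrable_measure_pmf_finite[OF q]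
  have cross: "measure_pmf.expectation q
      (\<lambda>y. \<Sum>i<N. 2 * (real_of_int (x i) - a i) * (real_of_int (y i) - b i)) = 0" for x
  proof -
    have "measure_pmf.expectation q
        (\<lambda>y. \<Sum>i<N. 2 * (real_of_int (x i) - a i) * (real_of_int (y i) - b i))
          = (\<Sum>i<N. 2 * (real_of_int (x i) - a i) * (mean_vec q i - b i))"
      by (simp add: Iq mean_vec_def)
    also have "\<dots> = 0" using b by simp
    finally show ?thesis .
  qed
  have inner: "measure_pmf.expectation q (\<lambda>y. \<Sum>i<N. (real_of_int (x i + y i) - (a i + b i))\<^sup>2)
      = (\<Sum>i<N. (real_of_int (x i) - a i)\<^sup>2) + mean_sq_dev N q b" for x
  proof -
    have "(\<lambda>y. \<Sum>i<N. (real_of_int (x i + y i) - (a i + b i))\<^sup>2)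
        = (\<lambda>y. (\<Sum>i<N. (real_of_int (x i) - a i)\<^sup>2) + (\<Sum>i<N. (real_of_int (y i) - b i)\<^sup>2)
            + (\<Sum>i<N. 2 * (real_of_int (x i) - a i) * (real_of_int (y i) - b i)))"
      by (simp add: fun_eq_iff sum.distrib[symmetric] power2_eq_square algebra_simps)
    then show ?thesis
      using cross[of x] by (simp add: Iq mean_sq_dev_def)
  qed
  show ?thesis
    unfolding mean_sq_dev_def expectation_indep_add_pmf[OF p q] inner
    by (simp add: Ip mean_sq_dev_def)
qed

lemma mean_sq_dev_mean_vec:
  assumes p: "finite (set_pmf p)"
  shows "mean_sq_dev N p (mean_vec p) = mean_sq_dev N p (\<lambda>_. 0) - (\<Sum>i<N. (mean_vec p i)\<^sup>2)"
proof -
  note I = integrable_measure_pmf_finite[OF p]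
  have "(\<lambda>x. \<Sum>i<N. (real_of_int (x i) - mean_vec p i)\<^sup>2)
      = (\<lambda>x. (\<Sum>i<N. (real_of_int (x i))\<^sup>2) - (\<Sum>i<N. 2 * mean_vec p i * real_of_int (x i))
          + (\<Sum>i<N. (mean_vec p i)\<^sup>2))"
    by (simp add: fun_eq_iff sum.distrib[symmetric] sum_subtractf[symmetric] power2_eq_square algebra_simps)
  moreover have "measure_pmf.expectation p (\<lambda>x. \<Sum>i<N. 2 * mean_vec p i * real_of_int (x i))
      = (\<Sum>i<N. 2 * (mean_vec p i)\<^sup>2)"
    by (simp add: I mean_vec_def power2_eq_square mult.assoc)
  ultimately show ?thesis
    by (simp add: I mean_sq_dev_def sum_distrib_left[symmetric])
qed

lemma finite_set_round_pmf: "finite (set_pmf (round_pmf Q))"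
  unfolding round_pmf_def by (simp add: finite_subset[of _ UNIV])

lemma expectation_round_pmf:
  fixes g :: "int \<Rightarrow> real"
  shows "measure_pmf.expectation (round_pmf Q) g
           = g (\<lfloor>Q\<rfloor> + 1) * (Q - of_int \<lfloor>Q\<rfloor>) + g \<lfloor>Q\<rfloor> * (1 - (Q - of_int \<lfloor>Q\<rfloor>))"
proof -
  have "0 \<le> Q - of_int \<lfloor>Q\<rfloor>" "Q - of_int \<lfloor>Q\<rfloor> \<le> 1"
    by linarith+
  then show ?thesis unfolding round_pmf_def by simp
qed

lemma expectation_round_pmf_id: "measure_pmf.expectation (round_pmf Q) real_of_int = Q"
  by (simp add: expectation_round_pmf algebra_simps)

text \<open>The rounding error contributes \<open>f (1 - f) \<le> 1/4\<close>, where \<open>f\<close> is the fractional part of \<open>Q\<close>.\<close>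

lemma expectation_round_pmf_square_le:
  "measure_pmf.expectation (round_pmf Q) (\<lambda>n. (real_of_int n)\<^sup>2) \<le> Q\<^sup>2 + 1/4"
proof -
  define f where "f = Q - of_int \<lfloor>Q\<rfloor>"
  have "measure_pmf.expectation (round_pmf Q) (\<lambda>n. (real_of_int n)\<^sup>2) = Q\<^sup>2 + f * (1 - f)"
    unfolding expectation_round_pmf f_def by (simp add: power2_eq_square algebra_simps)
  also have "\<dots> \<le> Q\<^sup>2 + 1/4"
    using sum_squares_ge_zero[of "f - 1/2" 0] by (simp add: power2_eq_square algebra_simps)
  finally show ?thesis .
qed

lemma real_of_int_unit_vec [simp]:
  "real_of_int (unit_vec l c i) = (if i = l then real_of_int c else 0)"
  by (simp add: unit_vec_def)

lemma sum_square_unit_vec: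
  assumes "l < N"
  shows "(\<Sum>i<N. (real_of_int (unit_vec l c i))\<^sup>2) = (real_of_int c)\<^sup>2"
proof -
  have "(\<Sum>i<N. (real_of_int (unit_vec l c i))\<^sup>2) = (\<Sum>i<N. if i = l then (real_of_int c)\<^sup>2 else 0)"
    by (rule sum.cong) auto
  then show ?thesis using assms by simp
qed

lemma mean_vec_rounded_unit_vec:
  "mean_vec (map_pmf (\<lambda>n. unit_vec l (n * \<sigma>)) (round_pmf Q)) i
     = (if i = l then Q * real_of_int \<sigma> else 0)"
  by (simp add: mean_vec_def expectation_round_pmf_id[unfolded o_def])

lemma second_moment_rounded_unit_vec_le:
  assumes "l < N" and "\<sigma>\<^sup>2 = 1"
  shows "mean_sq_dev N (map_pmf (\<lambda>n. unit_vec l (n * \<sigma>)) (round_pmf Q)) (\<lambda>_. 0) \<le> Q\<^sup>2 + 1/4"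
proof -
  have "(real_of_int (n * \<sigma>))\<^sup>2 = (real_of_int n)\<^sup>2" for n
    using arg_cong[OF assms(2), of real_of_int] by (simp add: power_mult_distrib)
  then show ?thesis
    using assms(1) expectation_round_pmf_square_le[of Q]
    by (simp del: real_of_int_unit_vec add: mean_sq_dev_def sum_square_unit_vec)
qed

lemma sgn_int_mult_sign:
  assumes "s \<in> {-1, 1}"
  shows "\<bar>x\<bar> * real_of_int (sgn_int (x * of_int s)) = of_int s * x"
    and "x \<noteq> 0 \<Longrightarrow> (sgn_int (x * of_int s))\<^sup>2 = 1"
  using assms by (auto simp: sgn_int_def mult_less_0_iff zero_less_mult_iff)

lemma finite_set_diag_pmf: "finite (set_pmf (diag_pmf A k s))"
  unfolding diag_pmf_def by (simp add: finite_set_round_pmf)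

lemma mean_vec_diag_pmf:
  assumes "s \<in> {-1, 1}"
  shows "mean_vec (diag_pmf A k s) i = (if i = k then of_int s * A k k else 0)"
  unfolding diag_pmf_def mean_vec_rounded_unit_vec using sgn_int_mult_sign(1)[OF assms] by simp

lemma mean_sq_dev_diag_pmf_le:
  assumes s: "s \<in> {-1, 1}" and k: "k < N" and nz: "A k k \<noteq> 0"
  shows "mean_sq_dev N (diag_pmf A k s) (mean_vec (diag_pmf A k s)) \<le> 1/4"
proof -
  have "(\<Sum>i<N. (mean_vec (diag_pmf A k s) i)\<^sup>2) = (\<Sum>i<N. if i = k then (A k k)\<^sup>2 else 0)"
    by (rule sum.cong) (use s in \<open>auto simp: mean_vec_diag_pmf power_mult_distrib\<close>)
  moreover have "mean_sq_dev N (diag_pmf A k s) (\<lambda>_. 0) \<le> \<bar>A k k\<bar>\<^sup>2 + 1/4"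
    unfolding diag_pmf_def
    by (rule second_moment_rounded_unit_vec_le[OF k sgn_int_mult_sign(2)[OF s nz]])
  ultimately show ?thesis
    using k by (simp add: mean_sq_dev_mean_vec[OF finite_set_diag_pmf])
qed

lemma offdiag_support_subset: "offdiag_support N A k \<subseteq> {..<N}"
  by (auto simp: offdiag_support_def)

lemma finite_offdiag_support: "finite (offdiag_support N A k)"
  by (rule finite_subset[OF offdiag_support_subset]) simp

lemma finite_set_spawn_pmf:
  "offdiag_support N A k \<noteq> {} \<Longrightarrow> finite (set_pmf (spawn_pmf N A k s))"
  unfolding spawn_pmf_def by (simp add: finite_offdiag_support finite_set_round_pmf)

lemma expectation_spawn_pmf:
  fixes g :: "(nat \<Rightarrow> int) \<Rightarrow> real" and N k :: nat and A :: "nat \<Rightarrow> nat \<Rightarrow> real"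
  defines "S \<equiv> offdiag_support N A k"
  assumes "S \<noteq> {}"
  shows "measure_pmf.expectation (spawn_pmf N A k s) g
    = (\<Sum>l\<in>S. measure_pmf.expectation (map_pmf (\<lambda>n. unit_vec l (n * sgn_int (A l k * of_int s)))
          (round_pmf (real (card S) * \<bar>A l k\<bar>))) g) / real (card S)"
proof -
  have "measure_pmf.expectation (spawn_pmf N A k s) g
    = (\<Sum>l\<in>S. measure_pmf.expectation (map_pmf (\<lambda>n. unit_vec l (n * sgn_int (A l k * of_int s)))
          (round_pmf (real (card S) * \<bar>A l k\<bar>))) g /\<^sub>R real (card S))"
    unfolding spawn_pmf_def S_def
    by (rule pmf_expectation_bind_pmf_of_set)
       (use assms(2) in \<open>simp_all add: S_def finite_offdiag_support finite_set_round_pmf\<close>)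
  then show ?thesis
    by (simp only: sum_divide_distrib real_scaleR_def divide_inverse_commute sum_distrib_left)
qed

lemma mean_vec_spawn_pmf:
  assumes ne: "offdiag_support N A k \<noteq> {}" and s: "s \<in> {-1, 1}"
  shows "mean_vec (spawn_pmf N A k s) i = (if i \<in> offdiag_support N A k then of_int s * A i k else 0)"
proof -
  define S where "S = offdiag_support N A k"
  define m where "m = real (card S)"
  have m: "m > 0"
    unfolding m_def S_def using ne finite_offdiag_support by (simp add: card_gt_0_iff)
  have "mean_vec (spawn_pmf N A k s) i = (\<Sum>l\<in>S. if i = l then m * (of_int s * A l k) else 0) / m"
    unfolding mean_vec_def expectation_spawn_pmf[OF ne] S_def[symmetric] m_def[symmetric]
    unfolding mean_vec_def[symmetric] mean_vec_rounded_unit_vec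
    by (simp add: mult.assoc sgn_int_mult_sign(1)[OF s] cong: if_cong)
  also have "\<dots> = (if i \<in> S then of_int s * A i k else 0)"
    using m by (simp add: S_def finite_offdiag_support)
  finally show ?thesis unfolding S_def .
qed

lemma mean_sq_dev_spawn_pmf_le:
  assumes ne: "offdiag_support N A k \<noteq> {}" and s: "s \<in> {-1, 1}"
  shows "mean_sq_dev N (spawn_pmf N A k s) (mean_vec (spawn_pmf N A k s))
           \<le> (real (card (offdiag_support N A k)) - 1) * (\<Sum>j\<in>offdiag_support N A k. (A j k)\<^sup>2) + 1/4"
proof -
  define S where "S = offdiag_support N A k"
  define m where "m = real (card S)"
  define T where "T = (\<Sum>j\<in>S. (A j k)\<^sup>2)"
  have m: "m > 0"
    unfolding m_def S_def using ne finite_offdiag_support by (simp add: card_gt_0_iff)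
  have target: "l < N" "A l k \<noteq> 0" if "l \<in> S" for l
    using that by (auto simp: S_def offdiag_support_def)
  have "mean_sq_dev N (spawn_pmf N A k s) (\<lambda>_. 0) \<le> (\<Sum>l\<in>S. (m * \<bar>A l k\<bar>)\<^sup>2 + 1/4) / m"
    unfolding mean_sq_dev_def expectation_spawn_pmf[OF ne] S_def[symmetric] m_def[symmetric]
    unfolding mean_sq_dev_def[symmetric]
    using m target sgn_int_mult_sign(2)[OF s]
    by (intro divide_right_mono sum_mono second_moment_rounded_unit_vec_le) auto
  also have "\<dots> = (m\<^sup>2 * T + m / 4) / m"
    by (simp add: sum.distrib power_mult_distrib sum_distrib_left T_def m_def)
  also have "\<dots> = m * T + 1/4"
    using m by (simp add: power2_eq_square field_simps)
  finally have second_moment: "mean_sq_dev N (spawn_pmf N A k s) (\<lambda>_. 0) \<le> m * T + 1/4" .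
  have "(\<Sum>i<N. (mean_vec (spawn_pmf N A k s) i)\<^sup>2) = (\<Sum>i<N. if i \<in> S then (A i k)\<^sup>2 else 0)"
    by (rule sum.cong) (use s in \<open>auto simp: mean_vec_spawn_pmf[OF ne s] S_def power_mult_distrib\<close>)
  also have "\<dots> = T"
    using offdiag_support_subset[of N A k]
    by (simp add: sum.If_cases Int_absorb1 T_def S_def)
  finally show ?thesis
    using second_moment
    by (simp add: mean_sq_dev_mean_vec[OF finite_set_spawn_pmf[OF ne]] S_def m_def T_def algebra_simps)
qed

lemma col_l0_eq_Suc_card_offdiag_support:
  assumes "k < N" and "A k k \<noteq> 0"
  shows "col_l0 N A k = Suc (card (offdiag_support N A k))"
proof -
  have "{j. j < N \<and> A j k \<noteq> 0} = insert k (offdiag_support N A k)"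
    using assms by (auto simp: offdiag_support_def)
  moreover have "k \<notin> offdiag_support N A k"
    by (simp add: offdiag_support_def)
  ultimately show ?thesis
    unfolding col_l0_def by (simp add: finite_offdiag_support)
qed

lemma offdiag_support_nonempty:
  assumes "k < N" and "A k k \<noteq> 0" and "2 \<le> col_l0 N A k"
  shows "offdiag_support N A k \<noteq> {}"
  using assms col_l0_eq_Suc_card_offdiag_support by fastforce

lemma offdiag_col_sq_l2_eq_sum_offdiag_support:
  "offdiag_col_sq_l2 N A k = (\<Sum>j\<in>offdiag_support N A k. (A j k)\<^sup>2)"
  unfolding offdiag_col_sq_l2_def
  by (rule sum.mono_neutral_right) (auto simp: offdiag_support_def)

lemma particle_pmf_eq_indep_add_pmf:
  "particle_pmf N A k s = indep_add_pmf (spawn_pmf N A k s) (diag_pmf A k s)"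
  unfolding particle_pmf_def indep_add_pmf_def ..

lemma finite_set_particle_pmf:
  "offdiag_support N A k \<noteq> {} \<Longrightarrow> finite (set_pmf (particle_pmf N A k s))"
  unfolding particle_pmf_eq_indep_add_pmf
  by (intro finite_set_indep_add_pmf finite_set_spawn_pmf finite_set_diag_pmf)

lemma mean_vec_particle_pmf:
  assumes "offdiag_support N A k \<noteq> {}" and "s \<in> {-1, 1}" and "i < N"
  shows "mean_vec (particle_pmf N A k s) i = of_int s * A i k"
  unfolding particle_pmf_eq_indep_add_pmf
  using assms
  by (auto simp: mean_vec_indep_add_pmf finite_set_spawn_pmf finite_set_diag_pmf
      mean_vec_spawn_pmf mean_vec_diag_pmf offdiag_support_def)

lemma mean_sq_dev_particle_pmf_le:
  assumes k: "k < N" and nz: "A k k \<noteq> 0" and col: "2 \<le> col_l0 N A k" and s: "s \<in> {-1, 1}"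
  shows "mean_sq_dev N (particle_pmf N A k s) (mean_vec (particle_pmf N A k s))
           \<le> (real (col_l0 N A k) - 2) * offdiag_col_sq_l2 N A k + 1/2"
proof -
  have ne: "offdiag_support N A k \<noteq> {}"
    by (rule offdiag_support_nonempty[OF k nz col])
  note spawn = finite_set_spawn_pmf[OF ne] and diag = finite_set_diag_pmf
  have "mean_sq_dev N (particle_pmf N A k s) (mean_vec (particle_pmf N A k s))
      = mean_sq_dev N (indep_add_pmf (spawn_pmf N A k s) (diag_pmf A k s))
          (\<lambda>i. mean_vec (spawn_pmf N A k s) i + mean_vec (diag_pmf A k s) i)"
    unfolding particle_pmf_eq_indep_add_pmf mean_vec_indep_add_pmf[OF spawn diag] ..
  also have "\<dots> = mean_sq_dev N (spawn_pmf N A k s) (mean_vec (spawn_pmf N A k s))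
                  + mean_sq_dev N (diag_pmf A k s) (mean_vec (diag_pmf A k s))"
    by (rule mean_sq_dev_indep_add_pmf[OF spawn diag refl])
  also have "\<dots> \<le> (real (card (offdiag_support N A k)) - 1) * (\<Sum>j\<in>offdiag_support N A k. (A j k)\<^sup>2)
                  + 1/4 + 1/4"
    by (intro add_mono mean_sq_dev_spawn_pmf_le[OF ne s] mean_sq_dev_diag_pmf_le[where A = A, OF s k nz])
  also have "\<dots> = (real (col_l0 N A k) - 2) * offdiag_col_sq_l2 N A k + 1/2"
    using k nz
    by (simp add: col_l0_eq_Suc_card_offdiag_support offdiag_col_sq_l2_eq_sum_offdiag_support)
  finally show ?thesis .
qed

lemma sum_indep_pmf_Cons: "sum_indep_pmf (p # ps) = indep_add_pmf p (sum_indep_pmf ps)"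
  by (simp add: indep_add_pmf_def)

lemma finite_set_sum_indep_pmf:
  "(\<And>p. p \<in> set ps \<Longrightarrow> finite (set_pmf p)) \<Longrightarrow> finite (set_pmf (sum_indep_pmf ps))"
  by (induction ps)
     (simp_all del: sum_indep_pmf.simps(2) add: sum_indep_pmf_Cons finite_set_indep_add_pmf)

lemma mean_vec_sum_indep_pmf:
  "(\<And>p. p \<in> set ps \<Longrightarrow> finite (set_pmf p))
     \<Longrightarrow> mean_vec (sum_indep_pmf ps) i = (\<Sum>p\<leftarrow>ps. mean_vec p i)"
proof (induction ps)
  case Nil
  then show ?case by (simp add: mean_vec_def)
next
  case (Cons p ps)
  then show ?case
    by (simp del: sum_indep_pmf.simps(2)
        add: sum_indep_pmf_Cons mean_vec_indep_add_pmf finite_set_sum_indep_pmf)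
qed

lemma mean_sq_dev_sum_indep_pmf:
  "(\<And>p. p \<in> set ps \<Longrightarrow> finite (set_pmf p))
     \<Longrightarrow> mean_sq_dev N (sum_indep_pmf ps) (\<lambda>i. \<Sum>p\<leftarrow>ps. mean_vec p i)
           = (\<Sum>p\<leftarrow>ps. mean_sq_dev N p (mean_vec p))"
proof (induction ps)
  case Nil
  then show ?case by (simp add: mean_sq_dev_def)
next
  case (Cons p ps)
  have "mean_sq_dev N (sum_indep_pmf (p # ps)) (\<lambda>i. \<Sum>q\<leftarrow>p # ps. mean_vec q i)
      = mean_sq_dev N p (mean_vec p) + mean_sq_dev N (sum_indep_pmf ps) (\<lambda>i. \<Sum>q\<leftarrow>ps. mean_vec q i)"
    unfolding sum_indep_pmf_Cons sum_list.Cons list.map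
    by (rule mean_sq_dev_indep_add_pmf)
       (use Cons.prems in \<open>simp_all add: finite_set_sum_indep_pmf mean_vec_sum_indep_pmf\<close>)
  then show ?case
    using Cons by simp
qed

lemma sum_list_map_particles:
  fixes g :: "nat \<times> int \<Rightarrow> real"
  shows "(\<Sum>x\<leftarrow>particles N v. g x) = (\<Sum>k<N. \<bar>real_of_int (v k)\<bar> * g (k, sgn (v k)))"
  by (induction N) (simp_all add: particles_def sum_list_replicate)

lemma set_particles: "(k, s) \<in> set (particles N v) \<Longrightarrow> k < N \<and> s \<in> {-1, 1}"
  by (auto simp: particles_def sgn_if)

lemma finite_set_particle_pmfs:
  assumes "\<And>k. k < N \<Longrightarrow> offdiag_support N A k \<noteq> {}"
  shows "p \<in> set (map (\<lambda>(k, s). particle_pmf N A k s) (particles N v)) \<Longrightarrow> finite (set_pmf p)"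
  using assms set_particles by (auto intro: finite_set_particle_pmf)

lemma sum_mean_vec_particle_pmfs:
  assumes ne: "\<And>k. k < N \<Longrightarrow> offdiag_support N A k \<noteq> {}" and i: "i < N"
  shows "(\<Sum>p\<leftarrow>map (\<lambda>(k, s). particle_pmf N A k s) (particles N v). mean_vec p i) = matvec N A v i"
proof -
  have "(\<Sum>p\<leftarrow>map (\<lambda>(k, s). particle_pmf N A k s) (particles N v). mean_vec p i)
      = (\<Sum>x\<leftarrow>particles N v. of_int (snd x) * A i (fst x))"
    unfolding map_map
    by (intro arg_cong[of _ _ sum_list] map_cong refl)
       (use set_particles i in \<open>auto simp: ne mean_vec_particle_pmf\<close>)
  also have "\<dots> = matvec N A v i"
    unfolding sum_list_map_particles matvec_def
    by (intro sum.cong refl) (simp add: abs_mult_sgn flip: of_int_abs of_int_mult)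
  finally show ?thesis .
qed

lemma mean_sq_dev_fciqmc_step:
  assumes ne: "\<And>k. k < N \<Longrightarrow> offdiag_support N A k \<noteq> {}"
  shows "mean_sq_dev N (fciqmc_step N A v) (matvec N A v)
           = (\<Sum>(k, s)\<leftarrow>particles N v. mean_sq_dev N (particle_pmf N A k s) (mean_vec (particle_pmf N A k s)))"
proof -
  define P where "P = map (\<lambda>(k, s). particle_pmf N A k s) (particles N v)"
  have "mean_sq_dev N (fciqmc_step N A v) (matvec N A v)
      = mean_sq_dev N (sum_indep_pmf P) (\<lambda>i. \<Sum>p\<leftarrow>P. mean_vec p i)"
    unfolding fciqmc_step_def P_def
    by (rule mean_sq_dev_cong) (simp only: sum_mean_vec_particle_pmfs[OF ne])
  also have "\<dots> = (\<Sum>p\<leftarrow>P. mean_sq_dev N p (mean_vec p))"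
    by (rule mean_sq_dev_sum_indep_pmf) (use finite_set_particle_pmfs[OF ne] in \<open>simp add: P_def\<close>)
  finally show ?thesis
    by (simp add: P_def comp_def case_prod_unfold)
qed

lemma mean_sq_dev_particle_pmf_le_Max:
  assumes k: "k < N" and "A k k \<noteq> 0" and "2 \<le> col_l0 N A k" and "s \<in> {-1, 1}"
  shows "mean_sq_dev N (particle_pmf N A k s) (mean_vec (particle_pmf N A k s))
           \<le> Max ((\<lambda>k. (real (col_l0 N A k) - 2) * offdiag_col_sq_l2 N A k) ` {..<N}) + 1/2"
proof -
  have "(real (col_l0 N A k) - 2) * offdiag_col_sq_l2 N A k
      \<le> Max ((\<lambda>k. (real (col_l0 N A k) - 2) * offdiag_col_sq_l2 N A k) ` {..<N})"
    using k by (intro Max_ge) auto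
  with mean_sq_dev_particle_pmf_le[OF assms] show ?thesis
    by linarith
qed

theorem mainTheorem4:
  fixes N :: nat and A :: "nat \<Rightarrow> nat \<Rightarrow> real" and v :: "nat \<Rightarrow> int"
  assumes N_pos: "0 < N"
    and sym: "\<And>i j. i < N \<Longrightarrow> j < N \<Longrightarrow> A i j = A j i"
    and diag: "\<And>k. k < N \<Longrightarrow> A k k \<noteq> 0"
    and cols: "\<And>k. k < N \<Longrightarrow> col_l0 N A k \<ge> 2"
  shows "measure_pmf.expectation (fciqmc_step N A v)
           (\<lambda>w. sq_l2_norm N (\<lambda>i. real_of_int (w i) - matvec N A v i))
         \<le> (Max ((\<lambda>k. (real (col_l0 N A k) - 2) * offdiag_col_sq_l2 N A k) ` {..<N}) + 1/2)
             * (l1_norm N v)^2 / l1_norm N v"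
proof -
  define C where "C = Max ((\<lambda>k. (real (col_l0 N A k) - 2) * offdiag_col_sq_l2 N A k) ` {..<N}) + 1/2"
  have "measure_pmf.expectation (fciqmc_step N A v)
           (\<lambda>w. sq_l2_norm N (\<lambda>i. real_of_int (w i) - matvec N A v i))
      = (\<Sum>(k, s)\<leftarrow>particles N v. mean_sq_dev N (particle_pmf N A k s) (mean_vec (particle_pmf N A k s)))"
    using mean_sq_dev_fciqmc_step offdiag_support_nonempty diag cols
    by (simp add: mean_sq_dev_def sq_l2_norm_def)
  also have "\<dots> \<le> (\<Sum>x\<leftarrow>particles N v. C)"
    unfolding C_def
    by (intro sum_list_mono) (auto dest!: set_particles intro!: mean_sq_dev_particle_pmf_le_Max diag cols)
  also have "\<dots> = C * l1_norm N v"
    by (simp add: sum_list_map_particles l1_norm_def sum_distrib_left mult.commute)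
  also have "\<dots> = C * (l1_norm N v)\<^sup>2 / l1_norm N v"
    by (cases "l1_norm N v = 0") (simp_all add: power2_eq_square)
  finally show ?thesis unfolding C_def .
qed

end
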